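(* Let $q$ be a power of an odd prime, $c\in\mathbb{F}_q^*$, $b\in\mathbb{F}_q$ a nonsquare, $\beta\in\mathbb{F}_{q^2}$ with $\beta^2=b$, and $f(X)=c(X^{q+1}+X^2)$ on $\mathbb{F}_{q^2}$. If $\alpha\in\mathbb{F}_{q^2}\setminus\beta\mathbb{F}_q$, where $\beta\mathbb{F}_q=\{y\beta:y\in\mathbb{F}_q\}$, then the number of $\gamma\in\mathbb{F}_{q^2}$ with $f(\gamma)=\alpha$ is either $0$ or $2$. *)

theory Defs
  imports "HOL-Computational_Algebra.Primes"
begin

text \<open>The field with q^2 elements is modelled as a finite field type 'a with CARD('a) = q^2;
  its unique subfield F_q of order q is the set of fixed points of the Frobenius x \<mapsto> x^q.\<close>
definition subfield_Fq :: "nat \<Rightarrow> 'a::{field,finite} set" where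
  "subfield_Fq q = {x. x ^ q = x}"

end

theory Submission
  imports Defs "HOL-Number_Theory.Residues"
begin

(* Put a = alpha / c. Since gamma^(q+1) + gamma^2 = gamma * t with t = gamma^q + gamma,
   and t lies in F_q, a solution gamma determines t <> 0 with gamma = a / t; applying the
   Frobenius to gamma * t = a gives a^q = gamma^q * t, hence t^2 = a^q + a. Conversely every
   t in F_q^* with t^2 = a^q + a gives the solution a / t. So the solutions correspond to the
   nonzero square roots of a^q + a in F_q, and these come in pairs +t, -t because the
   characteristic is odd. *)

(* The library version finite_field_power_card_eq_same requires the sort finite_field. *)
lemma power_card_UNIV_eq_same:
  fixes x :: "'a::{field,finite}"
  shows "x ^ card (UNIV :: 'a set) = x"
proof -
  have card_pos: "0 < card (UNIV :: 'a set)"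
    by (rule finite_UNIV_card_ge_0) simp
  show ?thesis
  proof (cases "x = 0")
    case False
    define G :: "'a monoid" where "G = \<lparr>carrier = UNIV - {0}, monoid.mult = (*), one = 1\<rparr>"
    have "group G"
    proof (rule groupI)
      show "\<exists>y\<in>carrier G. y \<otimes>\<^bsub>G\<^esub> z = \<one>\<^bsub>G\<^esub>" if "z \<in> carrier G" for z
        using that by (intro bexI[of _ "inverse z"]) (auto simp: G_def)
    qed (auto simp: G_def)
    then have "x [^]\<^bsub>G\<^esub> order G = \<one>\<^bsub>G\<^esub>"
      using False by (intro group.pow_order_eq_1) (auto simp: G_def)
    moreover have "y [^]\<^bsub>G\<^esub> n = y ^ n" for y :: 'a and n
      by (induction n) (simp_all add: G_def)
    moreover have "order G = card (UNIV :: 'a set) - 1"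
      by (simp add: order_def G_def card_Diff_singleton)
    ultimately have "x ^ (card (UNIV :: 'a set) - 1) = 1"
      by (simp add: G_def)
    then show ?thesis
      using power_minus_mult[OF card_pos, of x] by simp
  qed (simp add: card_pos)
qed

lemma CHAR_eq_prime_if_card_eq_power:
  assumes "prime p" and "card (UNIV :: 'a::{idom,finite} set) = p ^ n"
  shows "CHAR('a) = p"
proof -
  have "prime CHAR('a)"
    by (intro prime_CHAR_semidom finite_imp_CHAR_pos) simp
  moreover have "CHAR('a) dvd p ^ n"
    using CHAR_dvd_CARD[where ?'a = 'a] assms(2) by simp
  ultimately show ?thesis
    using assms(1) prime_dvd_power primes_dvd_imp_eq by blast
qed

lemma card_square_roots_in_neg_closed_set:
  fixes A :: "'a::idom set"
  assumes "(2::'a) \<noteq> 0" and "0 \<notin> A" and "\<And>t. t \<in> A \<Longrightarrow> -t \<in> A"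
  shows "card {t \<in> A. t ^ 2 = s} \<in> {0, 2}"
proof (cases "{t \<in> A. t ^ 2 = s} = {}")
  case False
  then obtain t0 where t0: "t0 \<in> A" "t0 ^ 2 = s"
    by blast
  then have "{t \<in> A. t ^ 2 = s} = {t0, -t0}"
    using assms(3) by (auto simp: power2_eq_iff)
  moreover have "t0 \<noteq> -t0"
  proof
    assume "t0 = -t0"
    then have "2 * t0 = 0"
      by (metis add.right_inverse mult_2)
    then show False
      using assms(1,2) t0(1) by simp
  qed
  ultimately show ?thesis
    by simp
next
  case True
  show ?thesis
    unfolding True by simp
qed

lemma card_mult_trace_eq_card_fixed_square_roots:
  fixes a :: "'a::field"
  assumes frob_add: "\<And>x y :: 'a. (x + y) ^ q = x ^ q + y ^ q"
    and frob_invol: "\<And>x :: 'a. (x ^ q) ^ q = x"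
    and "a \<noteq> 0"
  shows "card {\<gamma>. \<gamma> * (\<gamma> ^ q + \<gamma>) = a} = card {t \<in> {t. t ^ q = t} - {0}. t ^ 2 = a ^ q + a}"
    (is "card ?S = card ?T")
proof -
  have trace_inverse: "(a / t) ^ q + a / t = t" if "t \<in> ?T" for t
  proof -
    from that have t: "t ^ q = t" "t \<noteq> 0" "a ^ q + a = t * t"
      by (auto simp: power2_eq_square)
    have "(a / t) ^ q + a / t = (a ^ q + a) / t"
      using t(1) by (simp add: power_divide add_divide_distrib)
    also have "\<dots> = t"
      using t by simp
    finally show ?thesis .
  qed
  have "bij_betw (\<lambda>t. a / t) ?T ?S"
  proof (rule bij_betw_byWitness[where f' = "\<lambda>\<gamma>. \<gamma> ^ q + \<gamma>"])
    show "\<forall>t\<in>?T. (a / t) ^ q + a / t = t"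
      using trace_inverse by blast
    show "(\<lambda>t. a / t) ` ?T \<subseteq> ?S"
      using trace_inverse by auto
    show "\<forall>\<gamma>\<in>?S. a / (\<gamma> ^ q + \<gamma>) = \<gamma>"
      using \<open>a \<noteq> 0\<close> by auto
    show "(\<lambda>\<gamma>. \<gamma> ^ q + \<gamma>) ` ?S \<subseteq> ?T"
    proof
      fix t assume "t \<in> (\<lambda>\<gamma>. \<gamma> ^ q + \<gamma>) ` ?S"
      then obtain \<gamma> where \<gamma>: "\<gamma> * t = a" and t: "t = \<gamma> ^ q + \<gamma>"
        by blast
      have "t ^ q = t"
        using t by (simp add: frob_add frob_invol)
      moreover have "t ^ 2 = a ^ q + a"
      proof -
        have "a ^ q = \<gamma> ^ q * t"
          using \<gamma> \<open>t ^ q = t\<close> by (metis power_mult_distrib)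
        then show ?thesis
          by (simp add: t \<gamma>[symmetric] power2_eq_square algebra_simps)
      qed
      moreover have "t \<noteq> 0"
        using \<gamma> \<open>a \<noteq> 0\<close> by auto
      ultimately show "t \<in> ?T"
        by simp
    qed
  qed
  then show ?thesis
    by (simp add: bij_betw_same_card)
qed

theorem lemma18:
  fixes p k q :: nat and c b \<beta> \<alpha> :: "'a::{field,finite}"
  assumes "prime p" and "odd p" and "k \<ge> 1" and "q = p ^ k"
    and "card (UNIV :: 'a set) = q ^ 2"
    and "c \<in> subfield_Fq q" and "c \<noteq> 0"
    and "b \<in> subfield_Fq q" and "\<not> (\<exists>y\<in>subfield_Fq q. y ^ 2 = b)"
    and "\<beta> ^ 2 = b"
    and "\<alpha> \<notin> {y * \<beta> | y. y \<in> subfield_Fq q}"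
  shows "card {\<gamma>. c * (\<gamma> ^ (q + 1) + \<gamma> ^ 2) = \<alpha>} \<in> {0, 2}"
proof -
  have char: "CHAR('a) = p"
    using assms(1,4,5)
    by (intro CHAR_eq_prime_if_card_eq_power[of p "k * 2"]) (simp_all add: power_mult)
  have frob_add: "(x + y) ^ q = x ^ q + y ^ q" for x y :: 'a
    using freshmans_dream'[of q k x y] assms(1,4) char by simp
  have frob_invol: "(x ^ q) ^ q = x" for x :: 'a
    using power_card_UNIV_eq_same[of x] assms(5) by (simp flip: power_mult add: power2_eq_square)
  have "\<not> p dvd 2"
    using primes_dvd_imp_eq[OF \<open>prime p\<close> two_is_prime_nat] \<open>odd p\<close> by auto
  then have "(2::'a) \<noteq> 0"
    using of_nat_eq_0_iff_char_dvd[of 2, where ?'a = 'a] char by simp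
  have "\<alpha> \<noteq> 0"
    using assms(4,11) \<open>prime p\<close> by (auto simp: subfield_Fq_def prime_gt_0_nat)
  have "{\<gamma>. c * (\<gamma> ^ (q + 1) + \<gamma> ^ 2) = \<alpha>} = {\<gamma>. \<gamma> * (\<gamma> ^ q + \<gamma>) = \<alpha> / c}"
    using \<open>c \<noteq> 0\<close> by (auto simp: field_simps power2_eq_square)
  moreover have "card {t \<in> {t. t ^ q = t} - {0}. t ^ 2 = s} \<in> {0, 2}" for s :: 'a
    using \<open>(2::'a) \<noteq> 0\<close> assms(2,4) by (intro card_square_roots_in_neg_closed_set) auto
  ultimately show ?thesis
    using card_mult_trace_eq_card_fixed_square_roots[OF frob_add frob_invol]
      \<open>\<alpha> \<noteq> 0\<close> \<open>c \<noteq> 0\<close> by simp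
qed

end
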